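(* Let $H$ be a separable Hilbert space, let $L\subset H$ be compact, let $K\subset H$ be a convex self-dual cone and let $v\in K$. Then there is $D>0$ with the following property. For all $a<b$ and all curves $c\in C^2([a,b],L)$ parametrized by arc length with $c'([a,b])\subset v-K$ and $c''([a,b])\subset K$, one has $l(c)\le D$.
   Context: A cone $K$ is self-dual if $K=\{u\in H:\langle u,k\rangle\ge0\ \forall k\in K\}$. $v-K=\{v-k:k\in K\}$. $l(c)$ is the length of $c$. *)

theory Defs
  imports "HOL-Analysis.Analysis"
begin

definition self_dual :: "'a::real_inner set \<Rightarrow> bool" where
  "self_dual K \<longleftrightarrow> K = {u. \<forall>k\<in>K. inner u k \<ge> 0}"

definition curve_length :: "(real \<Rightarrow> 'a::real_normed_vector) \<Rightarrow> real \<Rightarrow> real \<Rightarrow> real" where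
  "curve_length c a b = integral {a..b} (\<lambda>t. norm (vector_derivative c (at t within {a..b})))"

end

theory Submission
  imports Defs
begin

text \<open>
  Put \<open>h t = \<langle>c' t, v\<rangle>\<close>. For \<open>s \<le> t\<close> the increment \<open>c' t - c' s\<close> is an integral of \<open>c''\<close>,
  hence lies in \<open>K\<close>, and \<open>v - c' t \<in> K\<close>; self-duality makes their inner product nonnegative,
  which unfolds to \<open>h t - h s \<ge> 1 - \<langle>c' s, c' t\<rangle> \<ge> 0\<close>. So \<open>h\<close> is nondecreasing and bounded
  by \<open>\<parallel>v\<parallel>\<close>. On a time interval \<open>[s, t]\<close> where \<open>h\<close> grows by at most \<open>1/2\<close>, the velocity stays
  in the half-space \<open>\<langle>\<cdot>, c' s\<rangle> \<ge> 1/2\<close>, so the curve advances at least \<open>(t - s)/2\<close> in the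
  direction \<open>c' s\<close>, which the diameter of \<open>L\<close> bounds. Cutting \<open>[a, b]\<close> at the times where \<open>h\<close>
  has grown by another \<open>1/2\<close> gives at most \<open>4\<parallel>v\<parallel> + 2\<close> such intervals. The length of a unit-speed
  curve is its duration, which is therefore bounded.
\<close>

lemma inner_left_has_real_derivative:
  "(g has_vector_derivative g') F \<Longrightarrow> ((\<lambda>r. inner (g r) u) has_real_derivative inner g' u) F"
  unfolding has_real_derivative_iff_has_vector_derivative
  by (rule bounded_linear.has_vector_derivative[OF bounded_linear_inner_left])

lemma mono_on_of_nonneg_derivative_within:
  fixes f :: "real \<Rightarrow> real"
  assumes deriv: "\<And>r. r \<in> {a..b} \<Longrightarrow> (f has_real_derivative f' r) (at r within {a..b})"
    and nonneg: "\<And>r. r \<in> {a..b} \<Longrightarrow> 0 \<le> f' r"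
  shows "mono_on {a..b} f"
proof (rule mono_onI)
  fix s t assume st: "s \<in> {a..b}" "t \<in> {a..b}" "s \<le> t"
  show "f s \<le> f t"
  proof (rule DERIV_nonneg_imp_increasing_open[OF \<open>s \<le> t\<close>])
    fix x assume x: "s < x" "x < t"
    then have "at x within {a..b} = at x"
      using st by (intro at_within_interior) auto
    then show "\<exists>y. DERIV f x :> y \<and> 0 \<le> y"
      using deriv nonneg x st by (metis atLeastAtMost_iff less_imp_le order_trans)
  next
    have "continuous_on {a..b} f"
      using deriv by (rule DERIV_continuous_on)
    then show "continuous_on {s..t} f"
      by (rule continuous_on_subset) (use st in auto)
  qed
qed

lemma inner_diff_ge_of_derivative_bound:
  fixes c :: "real \<Rightarrow> 'a::real_inner"
  assumes "s \<le> t"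
    and deriv: "\<And>r. r \<in> {s..t} \<Longrightarrow> (c has_vector_derivative c' r) (at r within {s..t})"
    and bound: "\<And>r. r \<in> {s..t} \<Longrightarrow> \<delta> \<le> inner (c' r) u"
  shows "\<delta> * (t - s) \<le> inner (c t - c s) u"
proof -
  have "mono_on {s..t} (\<lambda>r. inner (c r) u - \<delta> * r)"
  proof (rule mono_on_of_nonneg_derivative_within)
    fix r assume "r \<in> {s..t}"
    then show "((\<lambda>r. inner (c r) u - \<delta> * r) has_real_derivative inner (c' r) u - \<delta>)
        (at r within {s..t})"
      using deriv by (auto intro!: derivative_eq_intros inner_left_has_real_derivative)
    show "0 \<le> inner (c' r) u - \<delta>"
      using bound \<open>r \<in> {s..t}\<close> by simp
  qed
  then have "inner (c s) u - \<delta> * s \<le> inner (c t) u - \<delta> * t"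
    using \<open>s \<le> t\<close> by (auto dest: mono_onD)
  then show ?thesis
    by (simp add: inner_diff_left algebra_simps)
qed

lemma self_dual_inner_nonneg:
  "self_dual K \<Longrightarrow> x \<in> K \<Longrightarrow> y \<in> K \<Longrightarrow> 0 \<le> inner x y"
  unfolding self_dual_def by blast

lemma self_dual_diff_mem_of_derivative:
  fixes g :: "real \<Rightarrow> 'a::real_inner"
  assumes "self_dual K" "s \<le> t"
    and deriv: "\<And>r. r \<in> {s..t} \<Longrightarrow> (g has_vector_derivative g' r) (at r within {s..t})"
    and mem: "\<And>r. r \<in> {s..t} \<Longrightarrow> g' r \<in> K"
  shows "g t - g s \<in> K"
proof -
  have "0 \<le> inner (g t - g s) k" if "k \<in> K" for k
    using inner_diff_ge_of_derivative_bound[OF \<open>s \<le> t\<close> deriv, of 0 k]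
      self_dual_inner_nonneg[OF \<open>self_dual K\<close> mem \<open>k \<in> K\<close>] by simp
  then show ?thesis
    using \<open>self_dual K\<close> unfolding self_dual_def by blast
qed

lemma self_dual_inner_gain:
  fixes x y v :: "'a::real_inner"
  assumes "self_dual K" "x - y \<in> K" "v - x \<in> K" "norm x = 1"
  shows "1 - inner y x \<le> inner x v - inner y v"
proof -
  have "0 \<le> inner (x - y) (v - x)"
    using assms self_dual_inner_nonneg by blast
  moreover have "inner x x = 1"
    using \<open>norm x = 1\<close> by (simp add: power2_norm_eq_inner[symmetric])
  ultimately show ?thesis
    by (simp add: inner_diff_left inner_diff_right inner_commute)
qed

lemma self_dual_velocity_inner_gain:
  fixes c' c'' :: "real \<Rightarrow> 'a::real_inner"
  assumes K: "self_dual K" and "a \<le> s" "s \<le> t" "t \<le> b"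
    and c': "\<And>r. r \<in> {a..b} \<Longrightarrow> (c' has_vector_derivative c'' r) (at r within {a..b})"
    and accel: "\<And>r. r \<in> {a..b} \<Longrightarrow> c'' r \<in> K"
    and "v - c' t \<in> K" "norm (c' t) = 1"
  shows "1 - inner (c' s) (c' t) \<le> inner (c' t) v - inner (c' s) v"
proof -
  have c'_sub: "(c' has_vector_derivative c'' r) (at r within {s..t})" if "r \<in> {s..t}" for r
    using that assms by (intro has_vector_derivative_within_subset[OF c']) auto
  have "c' t - c' s \<in> K"
    by (rule self_dual_diff_mem_of_derivative[OF K \<open>s \<le> t\<close> c'_sub]) (use accel assms in auto)
  then show ?thesis
    using self_dual_inner_gain[OF K] assms by blast
qed

lemma interval_length_le_of_small_increments:
  fixes h :: "real \<Rightarrow> real"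
  assumes cont: "continuous_on {a..b} h" and "0 \<le> \<epsilon>" "a \<le> b"
    and short: "\<And>s t. a \<le> s \<Longrightarrow> s \<le> t \<Longrightarrow> t \<le> b \<Longrightarrow> h t - h s \<le> \<epsilon> \<Longrightarrow> t - s \<le> l"
    and "h b - h a \<le> real (Suc n) * \<epsilon>"
  shows "b - a \<le> real (Suc n) * l"
proof -
  have "0 \<le> l"
    using short[of a a] \<open>0 \<le> \<epsilon>\<close> \<open>a \<le> b\<close> by simp
  have "b - s \<le> real (Suc n) * l" if "a \<le> s" "s \<le> b" "h b - h s \<le> real (Suc n) * \<epsilon>" for s
    using that
  proof (induction n arbitrary: s)
    case 0
    then show ?case using short by simp
  next
    case (Suc n)
    show ?case
    proof (cases "h b - h s \<le> \<epsilon>")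
      case True
      then have "b - s \<le> l" using short Suc.prems by simp
      moreover have "0 \<le> l * real n" using \<open>0 \<le> l\<close> by simp
      ultimately have "b - s \<le> l + l + l * real n" using \<open>0 \<le> l\<close> by linarith
      then show ?thesis by (simp add: algebra_simps)
    next
      case False
      have "continuous_on {s..b} h"
        using cont by (rule continuous_on_subset) (use Suc.prems in auto)
      then obtain r where r: "s \<le> r" "r \<le> b" "h r = h s + \<epsilon>"
        using IVT'[of h s "h s + \<epsilon>" b] False \<open>0 \<le> \<epsilon>\<close> Suc.prems by auto
      have "r - s \<le> l" using short[of s r] r Suc.prems by simp
      moreover have "b - r \<le> real (Suc n) * l"
        using Suc.IH[of r] r Suc.prems by (simp add: algebra_simps)
      ultimately show ?thesis by (simp add: algebra_simps)
    qed
  qed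
  then show ?thesis using assms by simp
qed

lemma curve_length_unit_speed:
  assumes "a < b"
    and deriv: "\<And>t. t \<in> {a..b} \<Longrightarrow> (c has_vector_derivative c' t) (at t within {a..b})"
    and unit: "\<And>t. t \<in> {a..b} \<Longrightarrow> norm (c' t) = 1"
  shows "curve_length c a b = b - a"
proof -
  have "curve_length c a b = integral {a..b} (\<lambda>t. 1::real)"
    unfolding curve_length_def
  proof (rule integral_cong)
    fix t assume t: "t \<in> {a..b}"
    then have "vector_derivative c (at t within {a..b}) = c' t"
      using vector_derivative_within_cbox[of a b t c "c' t"] \<open>a < b\<close> deriv by auto
    then show "norm (vector_derivative c (at t within {a..b})) = 1"
      using unit t by simp
  qed
  then show ?thesis using \<open>a < b\<close> by simp
qed

lemma cone_curve_duration_le: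
  fixes c c' c'' :: "real \<Rightarrow> 'a::real_inner"
  assumes K: "self_dual K" and "a \<le> b"
    and c: "\<And>t. t \<in> {a..b} \<Longrightarrow> (c has_vector_derivative c' t) (at t within {a..b})"
    and c': "\<And>t. t \<in> {a..b} \<Longrightarrow> (c' has_vector_derivative c'' t) (at t within {a..b})"
    and unit: "\<And>t. t \<in> {a..b} \<Longrightarrow> norm (c' t) = 1"
    and below_v: "\<And>t. t \<in> {a..b} \<Longrightarrow> v - c' t \<in> K"
    and accel: "\<And>t. t \<in> {a..b} \<Longrightarrow> c'' t \<in> K"
    and diam: "\<And>s t. s \<in> {a..b} \<Longrightarrow> t \<in> {a..b} \<Longrightarrow> norm (c t - c s) \<le> d"
  shows "b - a \<le> 2 * d * (4 * norm v + 2)"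
proof -
  define h where "h r = inner (c' r) v" for r
  have c_sub: "(c has_vector_derivative c' r) (at r within {s..t})"
    if "a \<le> s" "t \<le> b" "r \<in> {s..t}" for s t r
    using that by (intro has_vector_derivative_within_subset[OF c]) auto
  have gain: "1 - inner (c' s) (c' t) \<le> h t - h s" if "a \<le> s" "s \<le> t" "t \<le> b" for s t
    using self_dual_velocity_inner_gain[OF K that c' accel below_v unit] that
    unfolding h_def by simp
  have h_mono: "h s \<le> h t" if "a \<le> s" "s \<le> t" "t \<le> b" for s t
    using gain[OF that] norm_cauchy_schwarz[of "c' s" "c' t"] unit that by auto
  have short: "t - s \<le> 2 * d" if "a \<le> s" "s \<le> t" "t \<le> b" "h t - h s \<le> 1/2" for s t
  proof -
    have "1/2 \<le> inner (c' r) (c' s)" if "r \<in> {s..t}" for r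
      using gain[of s r] h_mono[of r t] that \<open>a \<le> s\<close> \<open>t \<le> b\<close> \<open>h t - h s \<le> 1/2\<close>
      by (auto simp: inner_commute)
    then have "1/2 * (t - s) \<le> inner (c t - c s) (c' s)"
      using inner_diff_ge_of_derivative_bound[OF \<open>s \<le> t\<close> c_sub] that by blast
    also have "\<dots> \<le> norm (c t - c s)"
      using norm_cauchy_schwarz[of "c t - c s" "c' s"] unit that by simp
    also have "\<dots> \<le> d"
      using diam that by simp
    finally show ?thesis by simp
  qed
  have h_cont: "continuous_on {a..b} h"
    unfolding h_def by (rule DERIV_continuous_on) (use c' inner_left_has_real_derivative in blast)
  define n where "n = nat \<lceil>4 * norm v\<rceil>"
  have h_bound: "\<bar>h r\<bar> \<le> norm v" if "r \<in> {a..b}" for r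
    using Cauchy_Schwarz_ineq2[of "c' r" v] unit that unfolding h_def by simp
  have n_eq: "real n = of_int \<lceil>4 * norm v\<rceil>"
    unfolding n_def by simp
  have "4 * norm v \<le> real n"
    unfolding n_eq by simp
  moreover have "\<bar>h a\<bar> \<le> norm v" "\<bar>h b\<bar> \<le> norm v"
    using h_bound \<open>a \<le> b\<close> by auto
  ultimately have "h b - h a \<le> real (Suc n) * (1/2)"
    by simp
  then have "b - a \<le> real (Suc n) * (2 * d)"
    using interval_length_le_of_small_increments[where \<epsilon> = "1/2" and l = "2 * d",
        OF h_cont _ \<open>a \<le> b\<close> short] by simp
  also have "\<dots> \<le> (4 * norm v + 2) * (2 * d)"
  proof (rule mult_right_mono)
    show "real (Suc n) \<le> 4 * norm v + 2"
      using of_int_ceiling_le_add_one[of "4 * norm v"] n_eq unfolding of_nat_Suc by linarith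
    show "0 \<le> 2 * d"
      using diam[of a a] \<open>a \<le> b\<close> by simp
  qed
  finally show ?thesis
    by (simp add: mult.commute)
qed

theorem theorem7:
  fixes L K :: "'a::{real_inner, complete_space} set" and v :: 'a
  assumes "separable_space (euclidean :: 'a topology)"
    and "compact L"
    and "convex_cone K" and "self_dual K"
    and "v \<in> K"
  shows "\<exists>D>0. \<forall>(a::real) b (c::real \<Rightarrow> 'a) c' c''.
           a < b
           \<and> (\<forall>t\<in>{a..b}. (c has_vector_derivative c' t) (at t within {a..b}))
           \<and> (\<forall>t\<in>{a..b}. (c' has_vector_derivative c'' t) (at t within {a..b}))
           \<and> continuous_on {a..b} c''
           \<and> c ` {a..b} \<subseteq> L
           \<and> (\<forall>t\<in>{a..b}. norm (c' t) = 1)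
           \<and> c' ` {a..b} \<subseteq> (\<lambda>k. v - k) ` K
           \<and> c'' ` {a..b} \<subseteq> K
           \<longrightarrow> curve_length c a b \<le> D"
proof (intro exI[of _ "2 * diameter L * (4 * norm v + 2) + 1"] conjI allI impI)
  show "0 < 2 * diameter L * (4 * norm v + 2) + 1"
    using diameter_ge_0[OF compact_imp_bounded[OF \<open>compact L\<close>]] by (intro add_nonneg_pos mult_nonneg_nonneg) auto
  fix a b :: real and c c' c'' :: "real \<Rightarrow> 'a"
  assume "a < b
           \<and> (\<forall>t\<in>{a..b}. (c has_vector_derivative c' t) (at t within {a..b}))
           \<and> (\<forall>t\<in>{a..b}. (c' has_vector_derivative c'' t) (at t within {a..b}))
           \<and> continuous_on {a..b} c''
           \<and> c ` {a..b} \<subseteq> L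
           \<and> (\<forall>t\<in>{a..b}. norm (c' t) = 1)
           \<and> c' ` {a..b} \<subseteq> (\<lambda>k. v - k) ` K
           \<and> c'' ` {a..b} \<subseteq> K"
  then have "a < b"
    and c: "\<And>t. t \<in> {a..b} \<Longrightarrow> (c has_vector_derivative c' t) (at t within {a..b})"
    and c': "\<And>t. t \<in> {a..b} \<Longrightarrow> (c' has_vector_derivative c'' t) (at t within {a..b})"
    and in_L: "c ` {a..b} \<subseteq> L"
    and unit: "\<And>t. t \<in> {a..b} \<Longrightarrow> norm (c' t) = 1"
    and below_v: "c' ` {a..b} \<subseteq> (\<lambda>k. v - k) ` K"
    and accel: "c'' ` {a..b} \<subseteq> K"
    by auto
  have "b - a \<le> 2 * diameter L * (4 * norm v + 2)"
  proof (rule cone_curve_duration_le[OF \<open>self_dual K\<close> _ c c' unit])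
    show "norm (c t - c s) \<le> diameter L" if "s \<in> {a..b}" "t \<in> {a..b}" for s t
    proof -
      have "c s \<in> L" "c t \<in> L"
        using in_L that by auto
      then show ?thesis
        using diameter_bounded_bound[OF compact_imp_bounded[OF \<open>compact L\<close>]] by (simp add: dist_norm)
    qed
    show "v - c' t \<in> K" if "t \<in> {a..b}" for t
      using below_v that by force
  qed (use \<open>a < b\<close> accel in auto)
  then show "curve_length c a b \<le> 2 * diameter L * (4 * norm v + 2) + 1"
    using curve_length_unit_speed[OF \<open>a < b\<close> c unit] by simp
qed

end
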